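(* Let $n\ge2$ be an integer, $\nu\in\{1,2,\dots,n\}$ and $N=2n+1$. Let $z_1,\dots,z_N$ be the roots of the polynomial \[s_n(z)+z^Ns_n(1/z),\qquad s_n(z):=\sum_{j=0}^q\frac{(-z^\nu)^j}{\nu^jj!},\qquad q:=\lfloor n/\nu\rfloor.\] Then all $z_k$ lie on the unit circle, the numbers $t_k:=\arg z_k\in[0,2\pi)$ are pairwise distinct, and for every trigonometric polynomial \[T_n(t)=\sum_{m=1}^n\tau_m(t),\qquad\tau_m(t)=a_m\cos mt+b_m\sin mt,\quad a_m,b_m\in\mathbb{R},\] the identity $\tau_\nu(t)\equiv\sum_{k=1}^NT_n(t-t_k)$ holds for all real $t$. *)

theory Defs
  imports "HOL-Analysis.Analysis" "HOL-Computational_Algebra.Polynomial"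
begin

definition s_poly :: "nat \<Rightarrow> nat \<Rightarrow> complex poly" where
  "s_poly n \<nu> = (\<Sum>j\<le>n div \<nu>. smult ((-1)^j / (of_nat (\<nu>^j) * of_nat (fact j))) (monom 1 (\<nu>*j)))"

text \<open>z^N s_n(1/z) with N = 2n+1, written out (note nu*j \<le> n < N).\<close>
definition s_refl_poly :: "nat \<Rightarrow> nat \<Rightarrow> complex poly" where
  "s_refl_poly n \<nu> = (\<Sum>j\<le>n div \<nu>. smult ((-1)^j / (of_nat (\<nu>^j) * of_nat (fact j))) (monom 1 (2*n+1 - \<nu>*j)))"

definition P_poly :: "nat \<Rightarrow> nat \<Rightarrow> complex poly" where
  "P_poly n \<nu> = s_poly n \<nu> + s_refl_poly n \<nu>"

definition tau :: "(nat \<Rightarrow> real) \<Rightarrow> (nat \<Rightarrow> real) \<Rightarrow> nat \<Rightarrow> real \<Rightarrow> real" where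
  "tau a b m t = a m * cos (real m * t) + b m * sin (real m * t)"

definition trig_T :: "(nat \<Rightarrow> real) \<Rightarrow> (nat \<Rightarrow> real) \<Rightarrow> nat \<Rightarrow> real \<Rightarrow> real" where
  "trig_T a b n t = (\<Sum>m=1..n. tau a b m t)"

end

theory Submission
  imports
    Defs
    "HOL-Computational_Algebra.Fundamental_Theorem_Algebra"
    "HOL-Computational_Algebra.Polynomial_FPS"
begin

(*
  The truncated exponential E_q(w) = sum_{j<=q} w^j / j! has no zeros in the closed unit disc
  for q >= 2: Re((1 - w) E_q(w)) is a nonnegative combination of the numbers 1 - Re(w^j), and
  these cannot all vanish unless w = 1. Hence s(z) = E_q(-z^nu / nu) has no zeros in the closed
  disc, and for such polynomials |z^N s(1/z)| <= |z|^(N - n) |s(z)| < |s(z)| inside the disc.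
  So P = s + z^N s(1/z) has no zeros in the open disc, and by P(1/z) = P(z) / z^N none outside
  the closed disc. At a double zero a of P on the circle, P(a) = P'(a) = 0 forces
  Re(a s'(a) / s(a)) = N/2, whereas this quantity is at most deg(s)/2 <= n/2 for a polynomial
  without zeros in the open disc.

  Reversing P gives prod_k (1 - z_k X), which agrees with s, hence with exp(-X^nu / nu), up to
  degree n; Newton's identities turn this into sum_k z_k^m = [m = nu] for 1 <= m <= n. Since
  tau_m(t - t_k) = Re((a_m - i b_m) e^(imt) conj(z_k^m)), summing over k leaves tau_nu(t).
*)

section \<open>Truncated exponential series\<close>

definition exp_trunc :: "nat \<Rightarrow> complex \<Rightarrow> complex" where
  "exp_trunc q w = (\<Sum>j\<le>q. w ^ j / fact j)"

definition fact_gap :: "nat \<Rightarrow> real" where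
  "fact_gap j = 1 / fact (j - 1) - 1 / fact j"

lemma fact_gap_nonneg: "fact_gap j \<ge> 0"
  unfolding fact_gap_def by (cases j) (auto simp: divide_simps)

lemma fact_gap_pos: "2 \<le> j \<Longrightarrow> fact_gap j > 0"
  unfolding fact_gap_def by (cases j) (auto simp: divide_simps)

lemma sum_fact_gap: "(\<Sum>j=1..q. fact_gap j) + 1 / fact q = 1"
  by (induction q) (auto simp: fact_gap_def)

lemma one_minus_mult_exp_trunc:
  "(1 - w) * exp_trunc q w
     = 1 - (\<Sum>j=1..q. of_real (fact_gap j) * w ^ j) - w ^ Suc q / fact q"
proof (induction q)
  case 0
  then show ?case by (simp add: exp_trunc_def)
next
  case (Suc q)
  have "(1 - w) * exp_trunc (Suc q) w = (1 - w) * exp_trunc q w + (1 - w) * w ^ Suc q / fact (Suc q)"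
    by (simp add: exp_trunc_def algebra_simps)
  also have "\<dots> = 1 - (\<Sum>j=1..Suc q. of_real (fact_gap j) * w ^ j) - w ^ Suc (Suc q) / fact (Suc q)"
    unfolding Suc.IH by (simp add: fact_gap_def field_simps del: of_nat_Suc)
  finally show ?case .
qed

lemma Re_one_minus_mult_exp_trunc:
  "Re ((1 - w) * exp_trunc q w)
     = (\<Sum>j=1..q. fact_gap j * (1 - Re (w ^ j))) + (1 - Re (w ^ Suc q)) / fact q"
proof -
  have "Re (w ^ Suc q / fact q) = Re (w ^ Suc q) / fact q"
    by (metis Re_divide_of_real of_real_fact)
  then have "Re ((1 - w) * exp_trunc q w)
      = ((\<Sum>j=1..q. fact_gap j) + 1 / fact q) - (\<Sum>j=1..q. fact_gap j * Re (w ^ j)) - Re (w ^ Suc q) / fact q"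
    unfolding one_minus_mult_exp_trunc sum_fact_gap by (simp add: Re_sum del: power_Suc)
  then show ?thesis
    by (simp add: sum_subtractf algebra_simps diff_divide_distrib del: power_Suc)
qed

lemma eq_1_if_Re_eq_1:
  assumes "cmod u \<le> 1" and "Re u = 1"
  shows "u = 1"
proof -
  have "(Re u)\<^sup>2 + (Im u)\<^sup>2 \<le> 1"
    using assms(1) by (simp add: cmod_def)
  then have "Im u = 0"
    using assms(2) by simp
  then show ?thesis
    using assms(2) by (simp add: complex_eq_iff)
qed

lemma Re_pow_eq_1_if_exp_trunc_eq_0:
  assumes "cmod w \<le> 1" and "exp_trunc q w = 0"
  shows "Re (w ^ Suc q) = 1" and "\<And>j. j \<in> {2..q} \<Longrightarrow> Re (w ^ j) = 1"
proof -
  have "(\<Sum>j=1..q. fact_gap j * (1 - Re (w ^ j))) + (1 - Re (w ^ Suc q)) / fact q = 0"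
    using Re_one_minus_mult_exp_trunc[of w q] assms(2) by simp
  moreover have "Re (w ^ j) \<le> 1" for j
    using abs_Re_le_cmod[of "w ^ j"] power_le_one[OF norm_ge_zero assms(1), of j]
    by (simp add: norm_power)
  ultimately have terms: "\<forall>j\<in>{1..q}. fact_gap j * (1 - Re (w ^ j)) = 0"
    and "Re (w ^ Suc q) = 1"
    using fact_gap_nonneg
    by (simp_all add: add_nonneg_eq_0_iff sum_nonneg sum_nonneg_eq_0_iff del: power_Suc)
  then show "Re (w ^ Suc q) = 1"
    by blast
  show "Re (w ^ j) = 1" if "j \<in> {2..q}" for j
  proof -
    have "fact_gap j * (1 - Re (w ^ j)) = 0"
      using terms that by simp
    then show ?thesis
      using that fact_gap_pos[of j] by simp
  qed
qed

(* Without the second hypothesis this fails: exp_trunc 1 (-1) = 0. *)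
lemma exp_trunc_nonzero:
  assumes "cmod w \<le> 1" and "2 \<le> q \<or> cmod w < 1"
  shows "exp_trunc q w \<noteq> 0"
proof
  assume zero: "exp_trunc q w = 0"
  note Re_pow = Re_pow_eq_1_if_exp_trunc_eq_0[OF assms(1) zero]
  have pow_eq_1: "w ^ j = 1" if "Re (w ^ j) = 1" for j
    using that assms(1) by (intro eq_1_if_Re_eq_1) (simp_all add: norm_power power_le_one)
  show False
  proof (cases "cmod w < 1")
    case True
    then have "cmod (w ^ Suc q) < 1"
      by (simp add: norm_power power_less_one_iff del: power_Suc)
    then show False
      using Re_pow(1) abs_Re_le_cmod[of "w ^ Suc q"] by linarith
  next
    case False
    with assms(2) have "2 \<le> q" by simp
    have "w ^ 2 = 1"
      using Re_pow(2)[of 2] \<open>2 \<le> q\<close> pow_eq_1 by simp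
    moreover have "Re (w ^ 3) = 1"
    proof (cases "q = 2")
      case True
      then show ?thesis
        using Re_pow(1) by (simp only: numeral_3_eq_3 numeral_2_eq_2)
    qed (use Re_pow(2)[of 3] \<open>2 \<le> q\<close> in simp)
    ultimately have "w = 1"
      using pow_eq_1[of 3] by (metis power2_eq_square power3_eq_cube mult_1_right mult.assoc)
    then have "exp_trunc q w = of_real (\<Sum>j\<le>q. 1 / fact j)"
      by (simp add: exp_trunc_def)
    moreover have "(\<Sum>j\<le>q. 1 / fact j :: real) > 0"
      by (intro sum_pos) auto
    ultimately show False
      using zero by (metis of_real_eq_0_iff less_irrefl)
  qed
qed

section \<open>Polynomials without zeros in the open unit disc\<close>

lemma degree_eq_0_if_no_roots:
  fixes p :: "complex poly"
  assumes "\<And>a. poly p a \<noteq> 0"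
  shows "degree p = 0"
  using assms fundamental_theorem_of_algebra constant_degree by blast

lemma norm_mult_sub_one_le:
  fixes z r :: complex
  assumes "cmod z \<le> 1" and "1 \<le> cmod r"
  shows "cmod (r * z - 1) \<le> cmod (r - cnj z)"
proof -
  obtain a b where r: "r = Complex a b" by (cases r)
  obtain c d where z: "z = Complex c d" by (cases z)
  have "c\<^sup>2 + d\<^sup>2 \<le> 1" and "1 \<le> a\<^sup>2 + b\<^sup>2"
    using assms unfolding r z cmod_def by simp_all
  then have "(1 - (c\<^sup>2 + d\<^sup>2)) * (1 - (a\<^sup>2 + b\<^sup>2)) \<le> 0"
    by (simp add: mult_nonneg_nonpos)
  then have "(a*c - b*d - 1)\<^sup>2 + (a*d + b*c)\<^sup>2 \<le> (a - c)\<^sup>2 + (b + d)\<^sup>2"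
    by (simp add: power2_eq_square algebra_simps)
  then show ?thesis
    unfolding r z cmod_def by (simp add: real_sqrt_le_iff)
qed

lemma norm_poly_reflect_le_norm_poly_cnj:
  fixes p :: "complex poly"
  assumes "\<And>r. poly p r = 0 \<Longrightarrow> 1 \<le> cmod r" and "cmod z \<le> 1"
  shows "cmod (poly (reflect_poly p) z) \<le> cmod (poly p (cnj z))"
  using assms(1)
proof (induction p rule: poly_root_induct[where P = "\<lambda>_. True"])
  case (no_roots p)
  then obtain c where "p = [:c:]"
    using degree_eq_0_if_no_roots degree_eq_zeroE by metis
  then show ?case by simp
next
  case (root a p)
  have a1: "1 \<le> cmod a" and roots_p: "\<And>r. poly p r = 0 \<Longrightarrow> 1 \<le> cmod r"
    using root.prems by auto
  have "cmod (poly (reflect_poly [:a, -1:]) z) = cmod (a * z - 1)"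
    by (simp add: reflect_poly_def algebra_simps)
  moreover have "cmod (poly [:a, -1:] (cnj z)) = cmod (a - cnj z)"
    by simp
  ultimately show ?case
    unfolding reflect_poly_mult poly_mult norm_mult
    using norm_mult_sub_one_le[OF assms(2) a1] root.IH[OF roots_p] by (simp add: mult_mono')
qed simp

lemma Re_div_sub_le_half:
  fixes z r :: complex
  assumes "cmod z = 1" and "1 \<le> cmod r"
  shows "Re (z / (z - r)) \<le> 1 / 2"
proof (cases "z = r")
  case False
  obtain a b where r: "r = Complex a b" by (cases r)
  obtain c d where z: "z = Complex c d" by (cases z)
  have "c\<^sup>2 + d\<^sup>2 = 1" and "1 \<le> a\<^sup>2 + b\<^sup>2"
    using assms unfolding r z cmod_def by simp_all
  then have "2 * (c * (c - a) + d * (d - b)) \<le> (c - a)\<^sup>2 + (d - b)\<^sup>2"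
    by (simp add: power2_eq_square algebra_simps)
  moreover have "(c - a)\<^sup>2 + (d - b)\<^sup>2 > 0"
    using False unfolding r z by (simp add: sum_power2_gt_zero_iff)
  moreover have "Re (z / (z - r)) = (c * (c - a) + d * (d - b)) / ((c - a)\<^sup>2 + (d - b)\<^sup>2)"
    unfolding r z by (simp add: Re_divide power2_eq_square)
  ultimately show ?thesis
    by (simp add: pos_divide_le_eq)
qed simp

lemma logderiv_linear_factor_mult:
  fixes p :: "complex poly"
  assumes "poly p z \<noteq> 0" and "z \<noteq> a"
  shows "z * poly (pderiv ([:a, -1:] * p)) z / poly ([:a, -1:] * p) z
    = z / (z - a) + z * poly (pderiv p) z / poly p z"
proof -
  have "poly (pderiv ([:a, -1:] * p)) z = (a - z) * poly (pderiv p) z - poly p z"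
    unfolding pderiv_mult by (simp add: pderiv_pCons algebra_simps)
  moreover have "poly ([:a, -1:] * p) z = (a - z) * poly p z"
    by (simp add: algebra_simps)
  ultimately have "z * poly (pderiv ([:a, -1:] * p)) z / poly ([:a, -1:] * p) z
      = z * ((a - z) * poly (pderiv p) z - poly p z) / ((a - z) * poly p z)"
    by (simp only:)
  also have "\<dots> = z / (z - a) + z * poly (pderiv p) z / poly p z"
    using assms by (simp add: divide_simps) (auto simp: algebra_simps)
  finally show ?thesis .
qed

lemma Re_logderiv_le_half_degree:
  fixes p :: "complex poly"
  assumes "\<And>r. poly p r = 0 \<Longrightarrow> 1 \<le> cmod r" and "cmod z = 1"
  shows "Re (z * poly (pderiv p) z / poly p z) \<le> degree p / 2"
  using assms(1)
proof (induction p rule: poly_root_induct[where P = "\<lambda>_. True"])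
  case (no_roots p)
  then obtain c where "p = [:c:]"
    using degree_eq_0_if_no_roots degree_eq_zeroE by metis
  then show ?case by (simp add: pderiv_pCons)
next
  case (root a p)
  show ?case
  proof (cases "poly p z = 0 \<or> z = a")
    case False
    have a1: "1 \<le> cmod a" and roots_p: "\<And>r. poly p r = 0 \<Longrightarrow> 1 \<le> cmod r"
      using root.prems by auto
    have "Re (z / (z - a)) + Re (z * poly (pderiv p) z / poly p z) \<le> 1 / 2 + degree p / 2"
      using Re_div_sub_le_half[OF assms(2) a1] root.IH[OF roots_p] by (rule add_mono)
    moreover have "z * poly (pderiv ([:a, -1:] * p)) z / poly ([:a, -1:] * p) z
        = z / (z - a) + z * poly (pderiv p) z / poly p z"
      using False by (intro logderiv_linear_factor_mult) auto
    moreover have "degree ([:a, -1:] * p) = degree p + 1"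
      using False by (subst degree_mult_eq) auto
    ultimately show ?thesis
      by (simp add: add_divide_distrib)
  qed auto
qed simp

lemma mult_poly_pderiv_monom_sum:
  fixes x :: "'a :: {comm_semiring_1, semiring_no_zero_divisors}"
  shows "x * poly (pderiv (\<Sum>j\<in>A. smult (c j) (monom 1 (e j)))) x = (\<Sum>j\<in>A. c j * of_nat (e j) * x ^ e j)"
proof -
  have pderiv_sum: "pderiv (sum f A) = (\<Sum>j\<in>A. pderiv (f j))" for f :: "'b \<Rightarrow> 'a poly"
    using higher_pderiv_sum[of 1 f A] by simp
  have pow: "x * (of_nat k * x ^ (k - 1)) = of_nat k * x ^ k" for k
    by (cases k) (simp_all add: algebra_simps)
  have "x * poly (pderiv (\<Sum>j\<in>A. smult (c j) (monom 1 (e j)))) x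
      = (\<Sum>j\<in>A. c j * (x * (of_nat (e j) * x ^ (e j - 1))))"
    by (simp add: pderiv_sum poly_sum pderiv_smult pderiv_monom poly_monom sum_distrib_left mult.left_commute)
  also have "\<dots> = (\<Sum>j\<in>A. c j * of_nat (e j) * x ^ e j)"
    unfolding pow by (simp add: mult.assoc)
  finally show ?thesis .
qed

lemma inj_on_roots_if_pderiv_nonzero:
  fixes z :: "'k \<Rightarrow> 'a :: idom"
  assumes "finite K" and "\<And>k. k \<in> K \<Longrightarrow> poly (pderiv (\<Prod>k\<in>K. [:- z k, 1:])) (z k) \<noteq> 0"
  shows "inj_on z K"
proof
  fix i j assume "i \<in> K" "j \<in> K" "z i = z j"
  show "i = j"
  proof (rule ccontr)
    assume "i \<noteq> j"
    let ?L = "[:- z i, 1:]"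
    define Q where "Q = (\<Prod>k\<in>K - {i} - {j}. [:- z k, 1:])"
    have "(\<Prod>k\<in>K. [:- z k, 1:]) = ?L * (\<Prod>k\<in>K - {i}. [:- z k, 1:])"
      using assms(1) \<open>i \<in> K\<close> by (rule prod.remove)
    also have "(\<Prod>k\<in>K - {i}. [:- z k, 1:]) = ?L * Q"
      unfolding Q_def \<open>z i = z j\<close> using assms(1) \<open>j \<in> K\<close> \<open>i \<noteq> j\<close> by (intro prod.remove) auto
    finally have "poly (pderiv (\<Prod>k\<in>K. [:- z k, 1:])) (z i) = poly (pderiv (?L * (?L * Q))) (z i)"
      by (simp only:)
    also have "\<dots> = 0"
      by (simp only: pderiv_mult poly_add poly_mult poly_pCons poly_0) simp
    finally show False
      using assms(2) \<open>i \<in> K\<close> by blast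
  qed
qed

section \<open>Newton's identities\<close>

lemma one_minus_mult_geometric_fps:
  fixes c :: "'a :: comm_ring_1"
  defines "H \<equiv> Abs_fps (\<lambda>m. if m = 0 then 0 else c ^ m)"
  shows "(1 - fps_const c * fps_X) * H = fps_const c * fps_X"
proof -
  have "(1 - fps_const c * fps_X) * H = H - fps_const c * (fps_X * H)"
    by (simp add: algebra_simps)
  also have "\<dots> = fps_const c * fps_X"
    by (rule fps_ext) (auto simp: H_def le_Suc_eq power_eq_if)
  finally show ?thesis .
qed

lemma newton_identity_fps:
  fixes z :: "'k \<Rightarrow> 'a :: comm_ring_1"
  assumes "finite K"
  shows "- fps_X * fps_deriv (\<Prod>k\<in>K. 1 - fps_const (z k) * fps_X)
    = (\<Prod>k\<in>K. 1 - fps_const (z k) * fps_X) * Abs_fps (\<lambda>m. if m = 0 then 0 else \<Sum>k\<in>K. z k ^ m)"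
  using assms
proof (induction K rule: finite_induct)
  case empty
  have "Abs_fps (\<lambda>m. if m = 0 then 0 else \<Sum>k\<in>{}. z k ^ m) = (0 :: 'a fps)"
    by (simp add: fps_eq_iff)
  then show ?case by simp
next
  case (insert a K)
  let ?L = "1 - fps_const (z a) * fps_X"
  let ?R = "\<Prod>k\<in>K. 1 - fps_const (z k) * fps_X"
  let ?G = "\<lambda>K. Abs_fps (\<lambda>m. if m = 0 then 0 else \<Sum>k\<in>K. z k ^ m)"
  have G: "?G (insert a K) = ?G K + Abs_fps (\<lambda>m. if m = 0 then 0 else z a ^ m)"
    using insert by (simp add: fps_eq_iff)
  have leibniz: "- fps_X * fps_deriv (?L * R) = ?L * (- fps_X * fps_deriv R) + fps_const (z a) * fps_X * R"
    for R :: "'a fps"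
    by (simp add: algebra_simps)
  have "- fps_X * fps_deriv (?L * ?R) = ?L * (- fps_X * fps_deriv ?R) + fps_const (z a) * fps_X * ?R"
    by (rule leibniz)
  also have "\<dots> = ?L * (?R * ?G K) + (?L * Abs_fps (\<lambda>m. if m = 0 then 0 else z a ^ m)) * ?R"
    by (simp only: insert.IH one_minus_mult_geometric_fps)
  also have "\<dots> = ?L * ?R * ?G (insert a K)"
    unfolding G by (simp only: distrib_left mult_ac)
  finally show ?case
    using insert by simp
qed

(* The recurrence says that R agrees with exp(-X^nu / nu) up to degree n, and the logarithmic
   derivative -X R'/R of the latter is X^nu. *)
lemma fps_nth_log_deriv_eq_indicator:
  fixes R G :: "'a :: comm_ring_1 fps"
  assumes log_deriv: "- fps_X * fps_deriv R = R * G"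
    and "fps_nth R 0 = 1" and "fps_nth G 0 = 0" and "1 \<le> \<nu>"
    and rec: "\<And>m. 1 \<le> m \<Longrightarrow> m \<le> n \<Longrightarrow> of_nat m * fps_nth R m = - (if \<nu> \<le> m then fps_nth R (m - \<nu>) else 0)"
  shows "1 \<le> m \<Longrightarrow> m \<le> n \<Longrightarrow> fps_nth G m = (if m = \<nu> then 1 else 0)"
proof (induction m rule: less_induct)
  case (less m)
  have summand: "fps_nth R i * fps_nth G (m - i) = (if i = m - \<nu> \<and> \<nu> < m then fps_nth R i else 0)"
    if "i \<in> {1..m}" for i
  proof (cases "i = m")
    case False
    then have "fps_nth G (m - i) = (if m - i = \<nu> then 1 else 0)"
      using less.IH[of "m - i"] less.prems that by auto
    then show ?thesis
      using that False by auto
  qed (use assms(3,4) in auto)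
  have "(\<Sum>i=1..m. fps_nth R i * fps_nth G (m - i)) = (\<Sum>i=1..m. if i = m - \<nu> \<and> \<nu> < m then fps_nth R i else 0)"
    by (rule sum.cong[OF refl summand])
  also have "\<dots> = (if \<nu> < m then fps_nth R (m - \<nu>) else 0)"
    using assms(4) by (cases "\<nu> < m") (simp_all add: sum.delta)
  finally have "(\<Sum>i=1..m. fps_nth R i * fps_nth G (m - i)) = (if \<nu> < m then fps_nth R (m - \<nu>) else 0)" .
  then have "fps_nth (R * G) m = fps_nth G m + (if \<nu> < m then fps_nth R (m - \<nu>) else 0)"
    using assms(2) by (simp add: fps_mult_nth sum.atLeast_Suc_atMost)
  moreover have "fps_nth (- fps_X * fps_deriv R) m = - (of_nat m * fps_nth R m)"
    using less.prems by (cases m) (simp_all add: algebra_simps)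
  ultimately have "fps_nth G m = (if \<nu> \<le> m then fps_nth R (m - \<nu>) else 0) - (if \<nu> < m then fps_nth R (m - \<nu>) else 0)"
    using log_deriv rec[OF less.prems] by (metis add_diff_cancel_right' minus_minus)
  then show ?case
    using assms(2) by auto
qed

section \<open>The polynomials s and P\<close>

definition s_coeff :: "nat \<Rightarrow> nat \<Rightarrow> complex" where
  "s_coeff \<nu> j = (-1) ^ j / (of_nat (\<nu> ^ j) * of_nat (fact j))"

lemma cnj_s_coeff [simp]: "cnj (s_coeff \<nu> j) = s_coeff \<nu> j"
  by (simp add: s_coeff_def)

lemma s_coeff_0 [simp]: "s_coeff \<nu> 0 = 1"
  by (simp add: s_coeff_def)

lemma s_coeff_Suc:
  assumes "1 \<le> \<nu>"
  shows "of_nat (\<nu> * Suc i) * s_coeff \<nu> (Suc i) = - s_coeff \<nu> i"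
proof -
  have "(of_nat \<nu> :: complex) \<noteq> 0" and "(of_nat (Suc i) :: complex) \<noteq> 0"
    using assms by (simp_all del: of_nat_Suc)
  then show ?thesis
    unfolding s_coeff_def power_Suc fact_Suc of_nat_mult by (simp add: field_simps del: of_nat_Suc)
qed

lemma mult_le_if_le_div: "j \<le> n div \<nu> \<Longrightarrow> \<nu> * j \<le> n" for j n \<nu> :: nat
  by (metis div_times_less_eq_dividend le_trans mult.commute mult_le_mono2)

lemma s_poly_eq_sum: "s_poly n \<nu> = (\<Sum>j\<le>n div \<nu>. smult (s_coeff \<nu> j) (monom 1 (\<nu> * j)))"
  by (simp add: s_poly_def s_coeff_def)

lemma s_refl_poly_eq_sum: "s_refl_poly n \<nu> = (\<Sum>j\<le>n div \<nu>. smult (s_coeff \<nu> j) (monom 1 (2*n+1 - \<nu> * j)))"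
  by (simp add: s_refl_poly_def s_coeff_def)

lemma poly_s_poly: "poly (s_poly n \<nu>) x = (\<Sum>j\<le>n div \<nu>. s_coeff \<nu> j * x ^ (\<nu> * j))"
  by (simp add: s_poly_eq_sum poly_sum poly_monom)

lemma poly_s_poly_cnj: "poly (s_poly n \<nu>) (cnj x) = cnj (poly (s_poly n \<nu>) x)"
  by (simp add: poly_s_poly)

lemma poly_s_poly_eq_exp_trunc: "poly (s_poly n \<nu>) x = exp_trunc (n div \<nu>) (- (x ^ \<nu>) / of_nat \<nu>)"
  unfolding poly_s_poly exp_trunc_def
  by (intro sum.cong) (simp_all add: s_coeff_def power_divide power_mult power_minus' of_nat_power)

lemma poly_s_poly_nonzero:
  assumes "1 \<le> \<nu>" and "2 \<le> n" and "cmod x \<le> 1"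
  shows "poly (s_poly n \<nu>) x \<noteq> 0"
proof -
  define w where "w = - (x ^ \<nu>) / of_nat \<nu>"
  have "cmod x ^ \<nu> \<le> 1"
    using assms(3) by (simp add: power_le_one)
  then have norm_w: "cmod w \<le> 1 / \<nu>"
    unfolding w_def by (simp add: norm_divide norm_power divide_right_mono)
  then have "cmod w \<le> 1"
    using assms(1) by (simp add: order_trans)
  moreover have "2 \<le> n div \<nu> \<or> cmod w < 1"
  proof (cases "\<nu> = 1")
    case False
    with assms(1) have "1 / real \<nu> < 1" by simp
    with norm_w show ?thesis by simp
  qed (use assms(2) in simp)
  ultimately show ?thesis
    unfolding poly_s_poly_eq_exp_trunc w_def[symmetric] by (rule exp_trunc_nonzero)
qed

lemma s_poly_root_norm_ge_1:
  assumes "1 \<le> \<nu>" and "2 \<le> n" and "poly (s_poly n \<nu>) r = 0"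
  shows "1 \<le> cmod r"
  using poly_s_poly_nonzero[OF assms(1,2)] assms(3) by force

lemma coeff_s_poly: "coeff (s_poly n \<nu>) m = (\<Sum>j\<le>n div \<nu>. if \<nu> * j = m then s_coeff \<nu> j else 0)"
  unfolding s_poly_eq_sum coeff_sum coeff_smult coeff_monom by (rule sum.cong) auto

lemma coeff_s_poly_0 [simp]: "coeff (s_poly n \<nu>) 0 = 1"
  unfolding coeff_s_poly by (cases "\<nu> = 0") (simp_all add: sum.delta)

lemma coeff_s_poly_eq:
  assumes "1 \<le> \<nu>" and "m \<le> n"
  shows "coeff (s_poly n \<nu>) m = (if \<nu> dvd m then s_coeff \<nu> (m div \<nu>) else 0)"
proof -
  have "coeff (s_poly n \<nu>) m = (\<Sum>j\<le>n div \<nu>. if j = m div \<nu> then (if \<nu> dvd m then s_coeff \<nu> j else 0) else 0)"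
    unfolding coeff_s_poly using assms(1) by (intro sum.cong) auto
  also have "\<dots> = (if \<nu> dvd m then s_coeff \<nu> (m div \<nu>) else 0)"
    using assms by (simp add: div_le_mono)
  finally show ?thesis .
qed

lemma coeff_s_poly_rec:
  assumes "1 \<le> \<nu>" and "1 \<le> m" and "m \<le> n"
  shows "of_nat m * coeff (s_poly n \<nu>) m = - (if \<nu> \<le> m then coeff (s_poly n \<nu>) (m - \<nu>) else 0)"
proof (cases "\<nu> dvd m")
  case True
  then obtain i where m: "m = \<nu> * Suc i"
    using assms(2) by (metis dvd_def mult_0_right not0_implies_Suc not_one_le_zero)
  then have "m - \<nu> = \<nu> * i" and "\<nu> \<le> m"
    by simp_all
  then show ?thesis
    using assms s_coeff_Suc[OF assms(1), of i] by (simp add: coeff_s_poly_eq m)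
next
  case False
  then have "\<not> \<nu> dvd (m - \<nu>)" if "\<nu> \<le> m"
    using that by (metis dvd_add_right_iff dvd_refl le_add_diff_inverse2)
  with False show ?thesis
    using assms by (simp add: coeff_s_poly_eq)
qed

lemma degree_s_poly_le: "degree (s_poly n \<nu>) \<le> n"
proof (rule degree_le, intro allI impI)
  fix m assume "n < m"
  then show "coeff (s_poly n \<nu>) m = 0"
    unfolding coeff_s_poly by (auto intro!: sum.neutral dest: mult_le_if_le_div)
qed

lemma coeff_s_refl_poly:
  "coeff (s_refl_poly n \<nu>) m = (if m \<le> 2*n+1 then coeff (s_poly n \<nu>) (2*n+1 - m) else 0)"
proof -
  have "(2*n+1 - \<nu> * j = m) \<longleftrightarrow> m \<le> 2*n+1 \<and> \<nu> * j = 2*n+1 - m" if "j \<le> n div \<nu>" for j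
    using mult_le_if_le_div[OF that] by auto
  then show ?thesis
    unfolding s_refl_poly_eq_sum coeff_s_poly coeff_sum coeff_smult coeff_monom
    by (auto intro!: sum.cong sum.neutral)
qed

lemma s_refl_poly_eq_monom_mult_reflect:
  "s_refl_poly n \<nu> = monom 1 (2*n+1 - degree (s_poly n \<nu>)) * reflect_poly (s_poly n \<nu>)"
  using degree_s_poly_le[of n \<nu>]
  by (intro poly_eqI) (auto simp: coeff_s_refl_poly coeff_monom_mult coeff_reflect_poly coeff_eq_0)

lemma poly_s_refl_poly_conv_s_poly:
  assumes "x \<noteq> 0"
  shows "poly (s_refl_poly n \<nu>) x = x ^ (2*n+1) * poly (s_poly n \<nu>) (1 / x)"
proof -
  have "x ^ (2*n+1) = x ^ (2*n+1 - degree (s_poly n \<nu>)) * x ^ degree (s_poly n \<nu>)"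
    using degree_s_poly_le[of n \<nu>] by (simp flip: power_add)
  then show ?thesis
    unfolding s_refl_poly_eq_monom_mult_reflect using assms
    by (simp add: poly_monom poly_reflect_poly_nz inverse_eq_divide)
qed

lemma poly_P_poly: "poly (P_poly n \<nu>) x = poly (s_poly n \<nu>) x + poly (s_refl_poly n \<nu>) x"
  by (simp add: P_poly_def)

lemma degree_P_poly: "degree (P_poly n \<nu>) = 2*n+1"
proof (rule antisym)
  show "degree (P_poly n \<nu>) \<le> 2*n+1"
    using degree_s_poly_le[of n \<nu>]
    by (intro degree_le) (auto simp: P_poly_def coeff_s_refl_poly coeff_eq_0)
  have "coeff (P_poly n \<nu>) (2*n+1) = 1"
    using degree_s_poly_le[of n \<nu>] by (simp add: P_poly_def coeff_s_refl_poly coeff_eq_0)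
  then show "2*n+1 \<le> degree (P_poly n \<nu>)"
    by (intro le_degree) simp
qed

lemma coeff_reflect_P_poly:
  assumes "m \<le> n"
  shows "coeff (reflect_poly (P_poly n \<nu>)) m = coeff (s_poly n \<nu>) m"
  using assms degree_s_poly_le[of n \<nu>]
  by (simp add: coeff_reflect_poly degree_P_poly) (simp add: P_poly_def coeff_s_refl_poly coeff_eq_0)

section \<open>Zeros of P\<close>

lemma poly_P_poly_nonzero_in_ball:
  assumes "1 \<le> \<nu>" and "2 \<le> n" and "cmod x < 1"
  shows "poly (P_poly n \<nu>) x \<noteq> 0"
proof -
  let ?s = "s_poly n \<nu>"
  define e where "e = 2*n+1 - degree ?s"
  have s_nonzero: "poly ?s x \<noteq> 0"
    using poly_s_poly_nonzero assms by simp
  have "cmod (poly (reflect_poly ?s) x) \<le> cmod (poly ?s (cnj x))"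
    using assms(3) by (intro norm_poly_reflect_le_norm_poly_cnj s_poly_root_norm_ge_1[OF assms(1,2)]) simp_all
  then have "cmod (poly (reflect_poly ?s) x) \<le> cmod (poly ?s x)"
    by (simp add: poly_s_poly_cnj)
  moreover have "cmod x ^ e < 1"
    using assms(3) degree_s_poly_le[of n \<nu>] by (simp add: e_def power_less_one_iff)
  ultimately have "cmod x ^ e * cmod (poly (reflect_poly ?s) x) \<le> cmod x ^ e * cmod (poly ?s x)"
    and "cmod x ^ e * cmod (poly ?s x) < cmod (poly ?s x)"
    using s_nonzero by (simp_all add: mult_left_mono mult_less_cancel_right2)
  then have "cmod (poly (s_refl_poly n \<nu>) x) < cmod (poly ?s x)"
    unfolding s_refl_poly_eq_monom_mult_reflect e_def[symmetric]
    by (simp add: poly_monom norm_mult norm_power)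
  then have "poly (s_refl_poly n \<nu>) x \<noteq> - poly ?s x"
    by auto
  then show ?thesis
    unfolding poly_P_poly by (simp add: add_eq_0_iff)
qed

lemma poly_P_poly_inverse:
  assumes "x \<noteq> 0"
  shows "poly (P_poly n \<nu>) (1 / x) = poly (P_poly n \<nu>) x / x ^ (2*n+1)"
proof -
  have "poly (s_refl_poly n \<nu>) (1 / x) = poly (s_poly n \<nu>) x / x ^ (2*n+1)"
    using assms by (simp add: poly_s_refl_poly_conv_s_poly power_one_over)
  moreover have "poly (s_poly n \<nu>) (1 / x) = poly (s_refl_poly n \<nu>) x / x ^ (2*n+1)"
    using assms by (simp add: poly_s_refl_poly_conv_s_poly)
  ultimately show ?thesis
    by (simp add: poly_P_poly add_divide_distrib)
qed

lemma P_poly_root_norm_eq_1: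
  assumes "1 \<le> \<nu>" and "2 \<le> n" and "poly (P_poly n \<nu>) x = 0"
  shows "cmod x = 1"
proof (rule ccontr)
  assume "cmod x \<noteq> 1"
  then consider "cmod x < 1" | "cmod x > 1"
    by linarith
  then show False
  proof cases
    case 2
    then have "x \<noteq> 0" and "cmod (1 / x) < 1"
      by (auto simp: norm_divide divide_less_eq_1)
    moreover have "poly (P_poly n \<nu>) (1 / x) = 0"
      using assms(3) \<open>x \<noteq> 0\<close> by (simp add: poly_P_poly_inverse)
    ultimately show False
      using poly_P_poly_nonzero_in_ball[OF assms(1,2)] by blast
  qed (use poly_P_poly_nonzero_in_ball assms in blast)
qed

lemma poly_s_refl_poly_on_circle:
  assumes "cmod a = 1"
  shows "poly (s_refl_poly n \<nu>) a = a ^ (2*n+1) * cnj (poly (s_poly n \<nu>) a)"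
proof -
  have "1 / a = cnj a" and "a \<noteq> 0"
    using assms by (auto simp: divide_conv_cnj)
  then show ?thesis
    unfolding poly_s_refl_poly_conv_s_poly[OF \<open>a \<noteq> 0\<close>] poly_s_poly_cnj[symmetric] by simp
qed

lemma pderiv_s_refl_poly_on_circle:
  assumes "cmod a = 1"
  shows "a * poly (pderiv (s_refl_poly n \<nu>)) a
    = a ^ (2*n+1) * (of_nat (2*n+1) * cnj (poly (s_poly n \<nu>) a) - cnj (a * poly (pderiv (s_poly n \<nu>)) a))"
proof -
  let ?N = "2*n+1"
  have inv: "1 / a = cnj a" and "a \<noteq> 0"
    using assms by (auto simp: divide_conv_cnj)
  have summand: "s_coeff \<nu> j * of_nat (?N - \<nu> * j) * a ^ (?N - \<nu> * j)
      = a ^ ?N * (of_nat ?N * (s_coeff \<nu> j * cnj a ^ (\<nu> * j)) - s_coeff \<nu> j * of_nat (\<nu> * j) * cnj a ^ (\<nu> * j))"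
    if "j \<le> n div \<nu>" for j
  proof -
    have "\<nu> * j \<le> ?N"
      using mult_le_if_le_div[OF that] by simp
    then have "a ^ (?N - \<nu> * j) = a ^ ?N * (1 / a) ^ (\<nu> * j)"
      using \<open>a \<noteq> 0\<close> by (simp add: power_diff power_one_over del: power_Suc)
    then have "a ^ (?N - \<nu> * j) = a ^ ?N * cnj a ^ (\<nu> * j)"
      unfolding inv .
    with \<open>\<nu> * j \<le> ?N\<close> show ?thesis
      by (simp add: algebra_simps)
  qed
  have "a * poly (pderiv (s_refl_poly n \<nu>)) a
      = (\<Sum>j\<le>n div \<nu>. s_coeff \<nu> j * of_nat (?N - \<nu> * j) * a ^ (?N - \<nu> * j))"
    unfolding s_refl_poly_eq_sum mult_poly_pderiv_monom_sum ..
  also have "\<dots> = a ^ ?N * (of_nat ?N * (\<Sum>j\<le>n div \<nu>. s_coeff \<nu> j * cnj a ^ (\<nu> * j))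
      - (\<Sum>j\<le>n div \<nu>. s_coeff \<nu> j * of_nat (\<nu> * j) * cnj a ^ (\<nu> * j)))"
    unfolding sum_distrib_left sum_subtractf[symmetric] by (rule sum.cong[OF refl], rule summand) simp
  also have "\<dots> = a ^ ?N * (of_nat ?N * cnj (poly (s_poly n \<nu>) a) - cnj (a * poly (pderiv (s_poly n \<nu>)) a))"
    unfolding s_poly_eq_sum mult_poly_pderiv_monom_sum poly_s_poly[unfolded s_poly_eq_sum] by simp
  finally show ?thesis .
qed

(* Used with S = s(a), D = a s'(a), u = a^N at a double zero a of P on the unit circle. *)
lemma two_Re_div_eq_if_reflection:
  fixes S D u :: complex
  assumes "S \<noteq> 0" and "u * cnj S = - S" and "D + u * (of_nat N * cnj S - cnj D) = 0"
  shows "2 * Re (D / S) = real N"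
proof -
  define w where "w = D / S"
  have "cnj S * D + (u * cnj S) * (of_nat N * cnj S - cnj D) = cnj S * (D + u * (of_nat N * cnj S - cnj D))"
    by (simp add: algebra_simps)
  then have "cnj S * D - S * (of_nat N * cnj S - cnj D) = 0"
    unfolding assms(2,3) by simp
  moreover have "D = w * S"
    using assms(1) by (simp add: w_def)
  ultimately have "cnj S * S * (w + cnj w - of_nat N) = 0"
    by (simp add: algebra_simps)
  then have "complex_of_real (2 * Re w) = of_real (real N)"
    using assms(1) by (simp add: complex_add_cnj)
  then show ?thesis
    unfolding w_def by (simp only: of_real_eq_iff)
qed

lemma poly_pderiv_P_poly_nonzero:
  assumes "1 \<le> \<nu>" and "2 \<le> n" and root: "poly (P_poly n \<nu>) a = 0"
  shows "poly (pderiv (P_poly n \<nu>)) a \<noteq> 0"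
proof
  assume deriv_root: "poly (pderiv (P_poly n \<nu>)) a = 0"
  let ?s = "s_poly n \<nu>" and ?N = "2*n+1"
  define S where "S = poly ?s a"
  define D where "D = a * poly (pderiv ?s) a"
  have circle: "cmod a = 1"
    using P_poly_root_norm_eq_1 assms by blast
  have "S \<noteq> 0"
    unfolding S_def using poly_s_poly_nonzero assms(1,2) circle by simp
  moreover have "a ^ ?N * cnj S = - S"
    using root poly_s_refl_poly_on_circle[OF circle]
    unfolding poly_P_poly S_def by (simp add: add_eq_0_iff)
  moreover have "a * poly (pderiv (P_poly n \<nu>)) a = D + a * poly (pderiv (s_refl_poly n \<nu>)) a"
    unfolding P_poly_def D_def by (simp add: pderiv_add distrib_left)
  then have "D + a ^ ?N * (of_nat ?N * cnj S - cnj D) = 0"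
    unfolding pderiv_s_refl_poly_on_circle[OF circle] deriv_root S_def D_def by simp
  ultimately have "2 * Re (D / S) = real ?N"
    by (rule two_Re_div_eq_if_reflection)
  moreover have "Re (D / S) \<le> degree ?s / 2"
    unfolding D_def S_def
    using circle by (intro Re_logderiv_le_half_degree s_poly_root_norm_ge_1[OF assms(1,2)])
  ultimately show False
    using degree_s_poly_le[of n \<nu>] by simp
qed

lemma P_poly_root_power_sums:
  assumes "1 \<le> \<nu>" and "finite K" and roots: "P_poly n \<nu> = (\<Prod>k\<in>K. [:- z k, 1:])"
    and "1 \<le> m" and "m \<le> n"
  shows "(\<Sum>k\<in>K. z k ^ m) = (if m = \<nu> then 1 else 0)"
proof -
  define R where "R = (\<Prod>k\<in>K. 1 - fps_const (z k) * fps_X)"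
  define G where "G = Abs_fps (\<lambda>m. if m = 0 then 0 else \<Sum>k\<in>K. z k ^ m)"
  have reflect_linear: "reflect_poly [:- c, 1:] = [:1, - c:]" for c :: complex
    by (simp add: reflect_poly_def)
  have fps_linear: "fps_of_poly [:1, - c:] = 1 - fps_const c * fps_X" for c :: complex
    by (simp add: fps_of_poly_pCons fps_const_neg[symmetric] algebra_simps del: fps_const_neg)
  have "R = fps_of_poly (reflect_poly (P_poly n \<nu>))"
    unfolding R_def roots reflect_poly_prod reflect_linear fps_of_poly_prod fps_linear ..
  then have coeff_R: "fps_nth R m = coeff (s_poly n \<nu>) m" if "m \<le> n" for m
    using that by (simp add: coeff_reflect_P_poly)
  have "fps_nth G m = (if m = \<nu> then 1 else 0)"
  proof (rule fps_nth_log_deriv_eq_indicator[of R G \<nu> n])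
    show "- fps_X * fps_deriv R = R * G"
      unfolding R_def G_def using assms(2) by (rule newton_identity_fps)
    show "of_nat k * fps_nth R k = - (if \<nu> \<le> k then fps_nth R (k - \<nu>) else 0)"
      if "1 \<le> k" "k \<le> n" for k
      using coeff_s_poly_rec[OF assms(1) that] that by (simp add: coeff_R)
  qed (use assms coeff_R[of 0] in \<open>simp_all add: G_def\<close>)
  then show ?thesis
    using assms(4) by (simp add: G_def)
qed

section \<open>The trigonometric identity\<close>

lemma tau_shift_Arg2pi:
  assumes "cmod w = 1"
  shows "tau a b m (t - Arg2pi w) = Re (Complex (a m) (- b m) * cis (real m * t) * cnj (w ^ m))"
proof -
  define \<theta> where "\<theta> = Arg2pi w"
  have "w = cis \<theta>"
    using Arg2pi_eq[of w] assms by (simp add: \<theta>_def cis_conv_exp)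
  then have "cis (real m * t) * cnj (w ^ m) = cis (real m * (t - \<theta>))"
    by (simp add: complex_cnj_power cis_cnj Complex.DeMoivre cis_mult algebra_simps)
  then show ?thesis
    by (simp add: tau_def \<theta>_def mult.assoc)
qed

lemma sum_trig_T_shift_eq_tau:
  assumes "finite K" and "\<forall>k\<in>K. cmod (z k) = 1" and "\<nu> \<in> {1..n}"
    and power_sums: "\<And>m. m \<in> {1..n} \<Longrightarrow> (\<Sum>k\<in>K. z k ^ m) = (if m = \<nu> then 1 else 0)"
  shows "(\<Sum>k\<in>K. trig_T a b n (t - Arg2pi (z k))) = tau a b \<nu> t"
proof -
  have "(\<Sum>k\<in>K. tau a b m (t - Arg2pi (z k))) = (if m = \<nu> then tau a b m t else 0)"
    if "m \<in> {1..n}" for m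
  proof -
    have "(\<Sum>k\<in>K. tau a b m (t - Arg2pi (z k)))
        = Re (Complex (a m) (- b m) * cis (real m * t) * cnj (\<Sum>k\<in>K. z k ^ m))"
      using assms(2) by (simp add: tau_shift_Arg2pi sum_distrib_left)
    then show ?thesis
      using power_sums[OF that] by (simp add: tau_def)
  qed
  then have "(\<Sum>k\<in>K. trig_T a b n (t - Arg2pi (z k))) = (\<Sum>m=1..n. if m = \<nu> then tau a b m t else 0)"
    unfolding trig_T_def by (subst sum.swap) (rule sum.cong, simp_all)
  then show ?thesis
    using assms(3) by simp
qed

lemma inj_on_Arg2pi_sphere: "inj_on Arg2pi (sphere 0 1)"
  by (rule inj_onI) (metis Arg2pi_eq mem_sphere_0)

theorem theorem2p3:
  fixes n \<nu> :: nat and z :: "nat \<Rightarrow> complex"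
  assumes "n \<ge> 2" and "\<nu> \<in> {1..n}"
    and roots: "P_poly n \<nu> = (\<Prod>k=1..2*n+1. [:- z k, 1:])"
  shows "(\<forall>k\<in>{1..2*n+1}. cmod (z k) = 1)
       \<and> inj_on (\<lambda>k. Arg2pi (z k)) {1..2*n+1}
       \<and> (\<forall>(a::nat \<Rightarrow> real) (b::nat \<Rightarrow> real) (t::real).
            tau a b \<nu> t = (\<Sum>k=1..2*n+1. trig_T a b n (t - Arg2pi (z k))))"
proof -
  let ?K = "{1..2*n+1}"
  have "1 \<le> \<nu>"
    using assms(2) by simp
  have root: "poly (P_poly n \<nu>) (z k) = 0" if "k \<in> ?K" for k
    using that unfolding roots poly_prod by (intro prod_zero bexI[of _ k]) simp_all
  then have circle: "\<forall>k\<in>?K. cmod (z k) = 1"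
    using P_poly_root_norm_eq_1 \<open>1 \<le> \<nu>\<close> assms(1) by blast
  have "inj_on z ?K"
  proof (rule inj_on_roots_if_pderiv_nonzero)
    show "poly (pderiv (\<Prod>k\<in>?K. [:- z k, 1:])) (z k) \<noteq> 0" if "k \<in> ?K" for k
      using poly_pderiv_P_poly_nonzero[OF \<open>1 \<le> \<nu>\<close> assms(1) root[OF that]] unfolding roots .
  qed simp
  moreover have "z ` ?K \<subseteq> sphere 0 1"
    using circle by auto
  ultimately have "inj_on (\<lambda>k. Arg2pi (z k)) ?K"
    using comp_inj_on inj_on_Arg2pi_sphere inj_on_subset unfolding comp_def by blast
  moreover have "tau a b \<nu> t = (\<Sum>k\<in>?K. trig_T a b n (t - Arg2pi (z k)))" for a b t
    using P_poly_root_power_sums[OF \<open>1 \<le> \<nu>\<close> _ roots] circle assms(2)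
    by (intro sum_trig_T_shift_eq_tau[symmetric]) auto
  ultimately show ?thesis
    using circle by blast
qed

end
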